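(* Let $\beta$ be an element of $\mathbb{K}$ (e.g. an indeterminate adjoined to $\mathbb{K}$). Let $G_{\mathrm{cyc}}$ be the $q$-grammar with master variables $S=\{x,y,z,e\}$, rule \[ x_j\mapsto q^jy_jx_{j+1},\quad y_j\mapsto q^jy_jx_{j+1},\quad z_j\mapsto q^jy_jx_{j+1},\quad e_j\mapsto \beta q^je_jz_{j+1}\qquad(j\ge0), \] and order KSO (identity), and let $D$ be its $q$-derivative. Let $\phi$ be the evaluation with $\phi(x_j)=x$, $\phi(y_j)=y$, $\phi(z_j)=z$, $\phi(e_j)=e$ for all $j$ (commuting indeterminates). Then for all $n\ge1$, \[ \phi\big(D^n(e_0)\big)=e\,F^{\mathrm{inv}}_n(q;x,y,z\mid\beta),\qquad F^{\mathrm{inv}}_n(q;x,y,z\mid\beta)=\sum_{\sigma\in\mathfrak{S}_n}q^{\operatorname{inv}(\sigma)}x^{\operatorname{iasc}(\sigma)}z^{\operatorname{isol}(\sigma)}y^{\operatorname{des}(\sigma)-1}\beta^{\operatorname{RLmin}(\sigma)}. \]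
   Context: $\mathbb{K}$ is a commutative ring with unity and characteristic zero, $q$ an indeterminate. For a set $S$ of master variables, $\mathbb{S}=\{s_i:s\in S,\ i\ge0\}$ is a set of non-commuting variables, $F(\mathbb{S})$ the free group on $\mathbb{S}$, $\mathbb{E}=\mathbb{K}[q][F(\mathbb{S})]$ its group algebra. A rule $R$ assigns to each $s_i$ an element of $\mathbb{E}$, extended by $R(s_i^{-1})=-s_i^{-1}R(s_i)s_{i+1}^{-1}$. The up-arrow $\uparrow$ is the linear map replacing each letter $s_i^{\pm1}$ by $s_{i+1}^{\pm1}$. The $q$-derivative of a $q$-grammar $(S,R,\rho)$ (with $\rho$ an order, i.e. a letter-permuting rewriting of words; KSO is the identity) is the $\mathbb{K}[q]$-linear map with $D(w_1\cdots w_n)=\sum_{j=1}^n\rho\big(w_1\cdots w_{j-1}R(w_j)\uparrow(w_{j+1}\cdots w_n)\big)$ for letters $w_j$, $D^0=\mathrm{id}$, $D^k=D\circ D^{k-1}$. An evaluation extends to a $\mathbb{K}[q]$-linear ring morphism. For $\sigma\in\mathfrak{S}_n$ with convention $\sigma_0=\sigma_{n+1}=0$: $0\le i\le n$ is a descent if $\sigma_i>\sigma_{i+1}$, an ascent otherwise, $\operatorname{des}$ counts descents; $\operatorname{inv}(\sigma)=\#\{(i,j):i<j,\ \sigma_i>\sigma_j\}$; a right-to-left minimum is an entry $\sigma_i$ with $\sigma_i<\sigma_j$ for all $j>i$, $\operatorname{RLmin}$ counts them; placing a bar at the start and after each right-to-left minimum, an entry alone between two consecutive bars is isolated, $\operatorname{isol}$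 counts isolated entries; an index $0\le i\le n-1$ is a non-isolated ascent if it is an ascent and $\sigma_{i+1}$ is not isolated, $\operatorname{iasc}$ counts them. *)

theory Defs
  imports "HOL-Computational_Algebra.Polynomial" "HOL-Combinatorics.Multiset_Permutations"
begin

datatype mvar = X | Y | Z | E

type_synonym letter = "mvar \<times> nat"
type_synonym word = "letter list"

(* An element of K[q][words] is a finitely supported coefficient function
   word => K[q]; the q-polynomials are 'a poly. *)
type_synonym 'a elt = "word \<Rightarrow> 'a poly"

definition supp :: "'a::zero elt \<Rightarrow> word set" where
  "supp f = {w. f w \<noteq> 0}"

definition single :: "word \<Rightarrow> 'a::zero poly \<Rightarrow> 'a elt" where
  "single w c = (\<lambda>w'. if w' = w then c else 0)"

definition up :: "word \<Rightarrow> word" where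
  "up w = map (\<lambda>(s, i). (s, Suc i)) w"

(* q-derivative of a q-grammar with rule R and order KSO (identity):
   D(w_1...w_n) = sum_j w_1...w_{j-1} R(w_j) up(w_{j+1}...w_n), extended linearly *)
definition qderiv :: "(letter \<Rightarrow> 'a::comm_ring_1 elt) \<Rightarrow> 'a elt \<Rightarrow> 'a elt" where
  "qderiv R f = (\<lambda>w'. \<Sum>w\<in>supp f. f w *
      (\<Sum>j<length w. \<Sum>u\<in>{u \<in> supp (R (w ! j)). take j w @ u @ up (drop (Suc j) w) = w'}.
          R (w ! j) u))"

fun rule_cyc :: "'a::comm_ring_1 \<Rightarrow> letter \<Rightarrow> 'a elt" where
  "rule_cyc \<beta> (X, j) = single [(Y, j), (X, Suc j)] (monom 1 j)"
| "rule_cyc \<beta> (Y, j) = single [(Y, j), (X, Suc j)] (monom 1 j)"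
| "rule_cyc \<beta> (Z, j) = single [(Y, j), (X, Suc j)] (monom 1 j)"
| "rule_cyc \<beta> (E, j) = single [(E, j), (Z, Suc j)] (monom \<beta> j)"

(* Elements of K[q][x,y,z,e] as coefficient functions:
   exponent tuple (a,b,c,d) of x^a y^b z^c e^d  ->  coefficient in K[q] *)
type_synonym 'a cpoly = "nat \<times> nat \<times> nat \<times> nat \<Rightarrow> 'a poly"

definition cnt :: "mvar \<Rightarrow> word \<Rightarrow> nat" where
  "cnt s w = length (filter (\<lambda>l. fst l = s) w)"

definition expo :: "word \<Rightarrow> nat \<times> nat \<times> nat \<times> nat" where
  "expo w = (cnt X w, cnt Y w, cnt Z w, cnt E w)"

definition phi :: "'a::comm_ring_1 elt \<Rightarrow> 'a cpoly" where
  "phi f = (\<lambda>m. \<Sum>w\<in>{w \<in> supp f. expo w = m}. f w)"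

(* sigma in S_n as the list [sigma_1,...,sigma_n], with sigma_0 = sigma_{n+1} = 0 *)
definition sg :: "nat list \<Rightarrow> nat \<Rightarrow> nat" where
  "sg xs i = (if 1 \<le> i \<and> i \<le> length xs then xs ! (i - 1) else 0)"

definition des :: "nat list \<Rightarrow> nat" where
  "des xs = card {i. i \<le> length xs \<and> sg xs i > sg xs (Suc i)}"

definition inv_stat :: "nat list \<Rightarrow> nat" where
  "inv_stat xs = card {(i, j). 1 \<le> i \<and> i < j \<and> j \<le> length xs \<and> sg xs i > sg xs j}"

definition is_rlmin :: "nat list \<Rightarrow> nat \<Rightarrow> bool" where
  "is_rlmin xs i \<longleftrightarrow> 1 \<le> i \<and> i \<le> length xs \<and> (\<forall>j. i < j \<and> j \<le> length xs \<longrightarrow> sg xs i < sg xs j)"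

definition RLmin :: "nat list \<Rightarrow> nat" where
  "RLmin xs = card {i. is_rlmin xs i}"

(* bars at the start and after each RL-minimum; sigma_i isolated iff there is a bar
   immediately before and immediately after position i *)
definition is_isol :: "nat list \<Rightarrow> nat \<Rightarrow> bool" where
  "is_isol xs i \<longleftrightarrow> 1 \<le> i \<and> i \<le> length xs \<and> (i = 1 \<or> is_rlmin xs (i - 1)) \<and> is_rlmin xs i"

definition isol :: "nat list \<Rightarrow> nat" where
  "isol xs = card {i. is_isol xs i}"

definition iasc :: "nat list \<Rightarrow> nat" where
  "iasc xs = card {i. i < length xs \<and> \<not> (sg xs i > sg xs (Suc i)) \<and> \<not> is_isol xs (Suc i)}"

definition eFinv :: "'a::comm_ring_1 \<Rightarrow> nat \<Rightarrow> 'a cpoly" where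
  "eFinv \<beta> n = (\<lambda>(a, b, c, d).
     if d = 1 then
       (\<Sum>\<sigma>\<in>{\<sigma> \<in> permutations_of_set {1..n}.
              iasc \<sigma> = a \<and> des \<sigma> - 1 = b \<and> isol \<sigma> = c}. monom (\<beta> ^ RLmin \<sigma>) (inv_stat \<sigma>))
     else 0)"

end

theory Submission
  imports Defs
begin

(* Inserting the largest entry n+1 into one of the n+1 gaps of a permutation of S_n yields
   every permutation of S_(n+1) exactly once.  Label gap k (between sigma_k and sigma_(k+1))
   by e if it is the last gap, by y if it is a descent, by z if it is an ascent into an
   isolated entry and by x otherwise, and read the gaps from right to left, the letter of gap k
   carrying the index n - k.  Inserting n+1 into gap i rewrites the letter at position n - i
   exactly as the rule of G_cyc does (x, y, z to y x and e to e z, raising all later indices),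
   adds n - i inversions (the factor q^(n-i)) and creates a new right-to-left minimum iff
   i = n (the factor beta of the rule for e).  Hence D^n(e_0) is the sum over sigma in S_n of
   q^inv beta^RLmin times the gap word of sigma, and phi counts its letters: iasc letters x,
   des - 1 letters y, isol letters z and a single e. *)

definition insert_at :: "nat \<Rightarrow> 'a \<Rightarrow> 'a list \<Rightarrow> 'a list" where
  "insert_at i m xs = take i xs @ m # drop i xs"

definition shift_pos :: "nat \<Rightarrow> nat \<Rightarrow> nat" where
  "shift_pos i k = (if k \<le> i then k else Suc k)"

lemma length_insert_at [simp]: "i \<le> length xs \<Longrightarrow> length (insert_at i m xs) = Suc (length xs)"
  by (simp add: insert_at_def)

lemma set_insert_at [simp]: "set (insert_at i m xs) = insert m (set xs)"
proof -
  have "set xs = set (take i xs) \<union> set (drop i xs)"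
    by (metis append_take_drop_id set_append)
  then show ?thesis by (auto simp: insert_at_def)
qed

lemma distinct_insert_at: "distinct xs \<Longrightarrow> m \<notin> set xs \<Longrightarrow> distinct (insert_at i m xs)"
  using distinct_append[of "take i xs" "drop i xs"]
  by (auto simp: insert_at_def dest: in_set_takeD in_set_dropD)

lemma insert_at_inject:
  assumes "insert_at i m xs = insert_at j m ys" and "m \<notin> set xs" "m \<notin> set ys"
    and "i \<le> length xs" "j \<le> length ys"
  shows "xs = ys \<and> i = j"
proof -
  have "m \<notin> set (take i xs)" "m \<notin> set (drop i xs)"
    using assms(2) by (auto dest: in_set_takeD in_set_dropD)
  then have take_eq: "take i xs = take j ys" and drop_eq: "drop i xs = drop j ys"
    using assms(1) by (simp_all add: insert_at_def append_Cons_eq_iff)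
  have "xs = ys"
    by (metis append_take_drop_id take_eq drop_eq)
  moreover have "i = j"
    using arg_cong[OF take_eq, of length] assms(4,5) \<open>xs = ys\<close> by simp
  ultimately show ?thesis ..
qed

lemma shift_pos_cases: obtains "k = Suc i" | k' where "k = shift_pos i k'"
proof -
  have "k = Suc i \<or> k = shift_pos i (if k \<le> i then k else k - 1)"
    by (auto simp: shift_pos_def)
  then show ?thesis using that by blast
qed

lemma shift_pos_less_iff [simp]: "shift_pos i a < shift_pos i b \<longleftrightarrow> a < b"
  by (auto simp: shift_pos_def)

lemma shift_pos_eq_iff [simp]: "shift_pos i a = shift_pos i b \<longleftrightarrow> a = b"
  by (auto simp: shift_pos_def)

lemma shift_pos_neq_new [simp]: "shift_pos i k \<noteq> Suc i" "Suc i \<noteq> shift_pos i k"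
  by (auto simp: shift_pos_def)

lemma new_less_shift_pos_iff [simp]: "Suc i < shift_pos i k \<longleftrightarrow> i < k"
  by (auto simp: shift_pos_def)

lemma Suc_0_le_shift_pos_iff [simp]: "Suc 0 \<le> shift_pos i k \<longleftrightarrow> Suc 0 \<le> k"
  by (auto simp: shift_pos_def)

lemma shift_pos_le_Suc_iff [simp]: "i \<le> n \<Longrightarrow> shift_pos i k \<le> Suc n \<longleftrightarrow> k \<le> n"
  by (auto simp: shift_pos_def)

lemma inj_shift_pos: "inj (shift_pos i)"
  by (simp add: inj_def)

lemma inj_map_prod_shift_pos: "inj (map_prod (shift_pos i) (shift_pos i))"
  by (auto simp: inj_def)

lemma all_positions_split: "(\<forall>k. P k) \<longleftrightarrow> P (Suc i) \<and> (\<forall>k. P (shift_pos i k))"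
  by (metis shift_pos_cases)

lemma Suc_shift_pos: "k \<noteq> i \<Longrightarrow> Suc (shift_pos i k) = shift_pos i (Suc k)"
  by (auto simp: shift_pos_def)

lemma sg_insert_at_shift_pos [simp]:
  "i \<le> length xs \<Longrightarrow> sg (insert_at i m xs) (shift_pos i k) = sg xs k"
  by (auto simp: sg_def insert_at_def shift_pos_def nth_append min_def Suc_diff_le)

lemma sg_insert_at_new [simp]: "i \<le> length xs \<Longrightarrow> sg (insert_at i m xs) (Suc i) = m"
  by (simp add: sg_def insert_at_def nth_append)

(* Gap k lies between sg xs k and sg xs (Suc k); for distinct lists, an ascent into a
   right-to-left minimum is an ascent into an isolated entry (is_isol_Suc_iff). *)
definition gap_label :: "nat list \<Rightarrow> nat \<Rightarrow> mvar" where
  "gap_label xs k =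
    (if k = length xs then E else if sg xs k > sg xs (Suc k) then Y
     else if is_rlmin xs (Suc k) then Z else X)"

definition gap_word :: "nat list \<Rightarrow> word" where
  "gap_word xs = rev (map (\<lambda>k. (gap_label xs k, length xs - k)) [0..<Suc (length xs)])"

lemma length_gap_word [simp]: "length (gap_word xs) = Suc (length xs)"
  by (simp add: gap_word_def)

lemma nth_gap_word: "p \<le> length xs \<Longrightarrow> gap_word xs ! p = (gap_label xs (length xs - p), p)"
  by (simp add: gap_word_def rev_nth nth_upt less_Suc_eq_le del: upt_Suc)

lemma cnt_gap_word: "cnt s (gap_word xs) = card {k. k \<le> length xs \<and> gap_label xs k = s}"
proof -
  have "cnt s (gap_word xs) = length (filter (\<lambda>k. gap_label xs k = s) [0..<Suc (length xs)])"
    by (simp add: cnt_def gap_word_def rev_filter[symmetric] filter_map o_def del: upt_Suc)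
  also have "\<dots> = card {k. k \<le> length xs \<and> gap_label xs k = s}"
    by (subst distinct_length_filter) (auto intro: arg_cong[where f = card])
  finally show ?thesis .
qed

lemma gap_label_eq_E_iff: "gap_label xs k = E \<longleftrightarrow> k = length xs"
  by (simp add: gap_label_def)

definition rule_word :: "letter \<Rightarrow> word" where
  "rule_word l =
    (if fst l = E then [(E, snd l), (Z, Suc (snd l))] else [(Y, snd l), (X, Suc (snd l))])"

definition rule_coeff :: "'a::comm_ring_1 \<Rightarrow> letter \<Rightarrow> 'a poly" where
  "rule_coeff \<beta> l = monom (if fst l = E then \<beta> else 1) (snd l)"

lemma rule_cyc_eq_single: "rule_cyc \<beta> l = single (rule_word l) (rule_coeff \<beta> l)"
  by (cases l, cases "fst l") (simp_all add: rule_word_def rule_coeff_def)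

definition rewrite_at :: "word \<Rightarrow> nat \<Rightarrow> word" where
  "rewrite_at w j = take j w @ rule_word (w ! j) @ up (drop (Suc j) w)"

lemma length_rewrite_at [simp]: "j < length w \<Longrightarrow> length (rewrite_at w j) = Suc (length w)"
  by (simp add: rewrite_at_def rule_word_def up_def)

lemma nth_rewrite_at:
  assumes "j < length w" "p \<le> length w"
  shows "rewrite_at w j ! p =
    (if p < j then w ! p else if p \<le> Suc j then rule_word (w ! j) ! (p - j)
     else (fst (w ! (p - 1)), Suc (snd (w ! (p - 1)))))"
proof -
  have "Suc (p - Suc (Suc 0)) = p - 1" if "Suc j < p"
    using that by simp
  then show ?thesis
    using assms by (auto simp: rewrite_at_def nth_append rule_word_def up_def split: prod.split)
qed

definition inversions :: "nat list \<Rightarrow> (nat \<times> nat) set" where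
  "inversions xs = {(a, b). 1 \<le> a \<and> a < b \<and> b \<le> length xs \<and> sg xs a > sg xs b}"

lemma inv_stat_eq_card_inversions: "inv_stat xs = card (inversions xs)"
  by (simp add: inv_stat_def inversions_def)

context
  fixes xs :: "nat list" and i m :: nat
  assumes gap: "i \<le> length xs" and new_max: "\<forall>a\<in>set xs. a < m" and m_pos: "0 < m"
begin

lemma sg_less_new_max: "sg xs k < m"
  using new_max m_pos by (auto simp: sg_def)

lemma not_new_max_less_sg: "\<not> m < sg xs k"
  using sg_less_new_max[of k] by simp

lemma is_rlmin_insert_at_shift_pos:
  "is_rlmin (insert_at i m xs) (shift_pos i k) \<longleftrightarrow> is_rlmin xs k"
  unfolding is_rlmin_def
  by (subst all_positions_split[where i = i]) (simp add: gap sg_less_new_max)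

lemma is_rlmin_insert_at_new: "is_rlmin (insert_at i m xs) (Suc i) \<longleftrightarrow> i = length xs"
  unfolding is_rlmin_def using gap not_new_max_less_sg
  by (subst all_positions_split[where i = i]) (auto dest: spec[of _ "length xs"])

lemma rlmin_positions_insert_at:
  "{k. is_rlmin (insert_at i m xs) k} =
    shift_pos i ` {k. is_rlmin xs k} \<union> (if i = length xs then {Suc i} else {})"
proof (intro set_eqI)
  fix k
  show "k \<in> {k. is_rlmin (insert_at i m xs) k} \<longleftrightarrow>
      k \<in> shift_pos i ` {k. is_rlmin xs k} \<union> (if i = length xs then {Suc i} else {})"
    by (cases k rule: shift_pos_cases[where i = i])
      (auto simp: is_rlmin_insert_at_new is_rlmin_insert_at_shift_pos inj_image_mem_iff inj_shift_pos)
qed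

lemma RLmin_insert_at: "RLmin (insert_at i m xs) = RLmin xs + (if i = length xs then 1 else 0)"
proof -
  have "finite {k. is_rlmin xs k}"
    by (rule finite_subset[of _ "{..length xs}"]) (auto simp: is_rlmin_def)
  then show ?thesis
    unfolding RLmin_def rlmin_positions_insert_at
    by (subst card_Un_disjoint) (auto simp: card_image inj_on_subset[OF inj_shift_pos])
qed

lemma inversions_insert_at:
  "inversions (insert_at i m xs) =
    map_prod (shift_pos i) (shift_pos i) ` inversions xs \<union> (\<lambda>k. (Suc i, shift_pos i k)) ` {i<..length xs}"
  (is "_ = ?shifted \<union> ?new")
proof (intro set_eqI)
  fix p :: "nat \<times> nat"
  obtain a b where p: "p = (a, b)" by fastforce
  show "p \<in> inversions (insert_at i m xs) \<longleftrightarrow> p \<in> ?shifted \<union> ?new"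
    using gap sg_less_new_max not_new_max_less_sg
    by (cases a rule: shift_pos_cases[where i = i]; cases b rule: shift_pos_cases[where i = i])
      (auto simp: p inversions_def inj_image_mem_iff[OF inj_map_prod_shift_pos] less_imp_le)
qed

lemma inv_stat_insert_at: "inv_stat (insert_at i m xs) = inv_stat xs + (length xs - i)"
proof -
  have "finite (inversions xs)"
    by (rule finite_subset[of _ "{..length xs} \<times> {..length xs}"]) (auto simp: inversions_def)
  moreover have "card (map_prod (shift_pos i) (shift_pos i) ` inversions xs) = card (inversions xs)"
    by (rule card_image, rule inj_on_subset[OF inj_map_prod_shift_pos subset_UNIV])
  ultimately show ?thesis
    unfolding inv_stat_eq_card_inversions inversions_insert_at
    by (subst card_Un_disjoint) (auto simp: card_image inj_on_def)
qed

lemma gap_label_insert_at_shift_pos: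
  assumes "k \<noteq> i"
  shows "gap_label (insert_at i m xs) (shift_pos i k) = gap_label xs k"
proof -
  have "shift_pos i k = Suc (length xs) \<longleftrightarrow> k = length xs"
    using assms gap by (auto simp: shift_pos_def)
  then show ?thesis
    using gap by (simp add: gap_label_def Suc_shift_pos[OF assms] is_rlmin_insert_at_shift_pos)
qed

lemma gap_label_insert_at_before_new:
  "gap_label (insert_at i m xs) i = (if i = length xs then Z else X)"
proof -
  have "sg (insert_at i m xs) i = sg xs i"
    using sg_insert_at_shift_pos[OF gap, of m i] by (simp add: shift_pos_def)
  then show ?thesis
    using gap sg_less_new_max[of i] by (simp add: gap_label_def is_rlmin_insert_at_new)
qed

lemma gap_label_insert_at_after_new:
  "gap_label (insert_at i m xs) (Suc i) = (if i = length xs then E else Y)"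
proof -
  have "sg (insert_at i m xs) (Suc (Suc i)) = sg xs (Suc i)"
    using sg_insert_at_shift_pos[OF gap, of m "Suc i"] by (simp add: shift_pos_def)
  then show ?thesis
    using gap sg_less_new_max[of "Suc i"] by (simp add: gap_label_def)
qed

lemma gap_word_insert_at:
  "gap_word (insert_at i m xs) = rewrite_at (gap_word xs) (length xs - i)"
proof (rule nth_equalityI)
  fix p
  assume "p < length (gap_word (insert_at i m xs))"
  then have p: "p \<le> Suc (length xs)"
    using gap by simp
  let ?j = "length xs - i"
  consider "p < ?j" | "p = ?j" | "p = Suc ?j" | "Suc ?j < p"
    by linarith
  then show "gap_word (insert_at i m xs) ! p = rewrite_at (gap_word xs) ?j ! p"
  proof cases
    case 1
    have "shift_pos i (length xs - p) = Suc (length xs) - p" "length xs - p \<noteq> i"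
      using 1 by (auto simp: shift_pos_def)
    then have "gap_label (insert_at i m xs) (Suc (length xs) - p) = gap_label xs (length xs - p)"
      by (metis gap_label_insert_at_shift_pos)
    with 1 show ?thesis
      using gap p by (simp add: nth_gap_word nth_rewrite_at)
  next
    case 2
    then show ?thesis
      using gap p by (simp add: nth_gap_word nth_rewrite_at gap_label_insert_at_after_new gap_label_eq_E_iff
        rule_word_def)
  next
    case 3
    then show ?thesis
      using gap p by (simp add: nth_gap_word nth_rewrite_at gap_label_insert_at_before_new gap_label_eq_E_iff
        rule_word_def)
  next
    case 4
    have "shift_pos i (Suc (length xs) - p) = Suc (length xs) - p" "Suc (length xs) - p \<noteq> i"
      using 4 p by (auto simp: shift_pos_def)
    then have "gap_label (insert_at i m xs) (Suc (length xs) - p) = gap_label xs (Suc (length xs) - p)"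
      by (metis gap_label_insert_at_shift_pos)
    with 4 show ?thesis
      using gap p by (simp add: nth_gap_word nth_rewrite_at)
  qed
qed (use gap in simp)

end

abbreviation perms :: "nat \<Rightarrow> nat list set" where
  "perms n \<equiv> permutations_of_set {1..n}"

lemma length_perms: "\<sigma> \<in> perms n \<Longrightarrow> length \<sigma> = n"
  using length_finite_permutations_of_set by fastforce

lemma perms_less_Suc: "\<sigma> \<in> perms n \<Longrightarrow> \<forall>a\<in>set \<sigma>. a < Suc n"
  by (auto simp: permutations_of_set_def)

lemma insert_at_in_perms:
  assumes "\<sigma> \<in> perms n"
  shows "insert_at i (Suc n) \<sigma> \<in> perms (Suc n)"
  using assms perms_less_Suc[OF assms]
  by (auto simp: permutations_of_set_def intro!: distinct_insert_at)

lemma bij_betw_insert_max: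
  "bij_betw (\<lambda>(\<sigma>, i). insert_at i (Suc n) \<sigma>) (perms n \<times> {..n}) (perms (Suc n))"
proof (rule bij_betw_imageI)
  show "inj_on (\<lambda>(\<sigma>, i). insert_at i (Suc n) \<sigma>) (perms n \<times> {..n})"
    using perms_less_Suc length_perms
    by (auto simp: inj_on_def dest!: insert_at_inject)
next
  show "(\<lambda>(\<sigma>, i). insert_at i (Suc n) \<sigma>) ` (perms n \<times> {..n}) = perms (Suc n)"
  proof (intro equalityI subsetI)
    fix \<tau>
    assume \<tau>: "\<tau> \<in> perms (Suc n)"
    then have "Suc n \<in> set \<tau>"
      by (simp add: permutations_of_set_def)
    then obtain as bs where \<tau>_split: "\<tau> = as @ Suc n # bs"
      by (meson split_list)
    have "distinct \<tau>" "set \<tau> = {1..Suc n}"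
      using \<tau> by (simp_all add: permutations_of_set_def)
    then have "set (as @ bs) = {1..Suc n} - {Suc n}" "distinct (as @ bs)"
      using \<tau>_split by auto
    then have "as @ bs \<in> perms n"
      by (auto intro: permutations_of_setI)
    moreover have "\<tau> = insert_at (length as) (Suc n) (as @ bs)"
      by (simp add: insert_at_def \<tau>_split)
    moreover have "length as \<le> n"
      using length_perms[OF \<open>as @ bs \<in> perms n\<close>] by simp
    ultimately show "\<tau> \<in> (\<lambda>(\<sigma>, i). insert_at i (Suc n) \<sigma>) ` (perms n \<times> {..n})"
      by force
  qed (auto intro: insert_at_in_perms simp del: One_nat_def)
qed

definition lin_comb ::
    "'b set \<Rightarrow> ('b \<Rightarrow> 'a::comm_monoid_add poly) \<Rightarrow> ('b \<Rightarrow> word) \<Rightarrow> 'a elt" where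
  "lin_comb A c f = (\<lambda>w. \<Sum>x\<in>{x \<in> A. f x = w}. c x)"

lemma supp_lin_comb: "supp (lin_comb A c f) \<subseteq> f ` A"
proof
  fix w
  assume w: "w \<in> supp (lin_comb A c f)"
  show "w \<in> f ` A"
  proof (rule ccontr)
    assume "w \<notin> f ` A"
    then have "{x \<in> A. f x = w} = {}"
      by blast
    with w show False
      by (simp add: supp_def lin_comb_def)
  qed
qed

lemma sum_lin_comb:
  assumes "finite A"
  shows "(\<Sum>w\<in>supp (lin_comb A c f). lin_comb A c f w * g w) = (\<Sum>x\<in>A. c x * g (f x))"
proof -
  have "(\<Sum>w\<in>supp (lin_comb A c f). lin_comb A c f w * g w) = (\<Sum>w\<in>f ` A. lin_comb A c f w * g w)"
    by (intro sum.mono_neutral_left finite_imageI assms supp_lin_comb) (simp add: supp_def)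
  also have "\<dots> = (\<Sum>x\<in>A. c x * g (f x))"
    using assms by (simp add: lin_comb_def sum_distrib_right sum.image_gen[of A _ f])
  finally show ?thesis .
qed

lemma qderiv_single_one:
  fixes R :: "letter \<Rightarrow> 'a::comm_ring_1 elt"
  shows "qderiv R (single w 1) w' = (\<Sum>j<length w. \<Sum>u\<in>{u \<in> supp (R (w ! j)).
      take j w @ u @ up (drop (Suc j) w) = w'}. R (w ! j) u)"
proof (cases "(1 :: 'a poly) = 0")
  case True \<comment> \<open>the zero ring, where single w 1 has empty support\<close>
  have trivial: "p = 0" for p :: "'a poly"
  proof -
    have "p = p * 1" by simp
    also have "\<dots> = 0" using True by simp
    finally show ?thesis .
  qed
  show ?thesis
    by (rule trans[OF trivial trivial[symmetric]])
next
  case False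
  then show ?thesis by (simp add: qderiv_def supp_def single_def)
qed

lemma qderiv_lin_comb:
  fixes R :: "letter \<Rightarrow> 'a::comm_ring_1 elt"
  assumes "finite A"
  shows "qderiv R (lin_comb A c f) w' = (\<Sum>x\<in>A. c x * qderiv R (single (f x) 1) w')"
  using assms unfolding qderiv_single_one by (simp add: qderiv_def sum_lin_comb)

lemma sum_supp_single: "(\<Sum>u\<in>{u \<in> supp (single v c). P u}. single v c u) = (if P v then c else 0)"
  by (cases "c = 0") (auto simp: supp_def single_def)

lemma qderiv_rule_cyc_single:
  "qderiv (rule_cyc \<beta>) (single w 1) w' =
    (\<Sum>j<length w. if rewrite_at w j = w' then rule_coeff \<beta> (w ! j) else 0)"
  by (simp add: qderiv_single_one rule_cyc_eq_single sum_supp_single rewrite_at_def)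

lemma phi_lin_comb:
  assumes "finite A"
  shows "phi (lin_comb A c f) m = (\<Sum>x\<in>{x \<in> A. expo (f x) = m}. c x)"
proof -
  have "finite (supp (lin_comb A c f))"
    by (rule finite_subset[OF supp_lin_comb finite_imageI[OF assms]])
  then have "phi (lin_comb A c f) m =
      (\<Sum>w\<in>supp (lin_comb A c f). lin_comb A c f w * of_bool (expo w = m))"
    unfolding phi_def by (simp add: Int_def)
  also have "\<dots> = (\<Sum>x\<in>A. c x * of_bool (expo (f x) = m))"
    by (rule sum_lin_comb[OF assms])
  finally show ?thesis
    using assms by (simp add: Int_def)
qed

definition perm_weight :: "'a::comm_ring_1 \<Rightarrow> nat list \<Rightarrow> 'a poly" where
  "perm_weight \<beta> \<sigma> = monom (\<beta> ^ RLmin \<sigma>) (inv_stat \<sigma>)"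

lemma perm_weight_insert_max:
  assumes "\<sigma> \<in> perms n" "i \<le> n"
  shows "perm_weight \<beta> (insert_at i (Suc n) \<sigma>) =
    perm_weight \<beta> \<sigma> * rule_coeff \<beta> (gap_word \<sigma> ! (n - i))"
proof -
  note new_max = perms_less_Suc[OF assms(1)] and n = length_perms[OF assms(1)]
  have "gap_word \<sigma> ! (n - i) = (gap_label \<sigma> i, n - i)"
    using assms n by (simp add: nth_gap_word)
  then show ?thesis
    using assms n
    by (simp add: perm_weight_def rule_coeff_def mult_monom gap_label_eq_E_iff
        RLmin_insert_at[OF _ new_max] inv_stat_insert_at[OF _ new_max])
qed

lemma qderiv_gap_word:
  assumes \<sigma>: "\<sigma> \<in> perms n"
  shows "perm_weight \<beta> \<sigma> * qderiv (rule_cyc \<beta>) (single (gap_word \<sigma>) 1) w' =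
    (\<Sum>i\<le>n. if gap_word (insert_at i (Suc n) \<sigma>) = w'
      then perm_weight \<beta> (insert_at i (Suc n) \<sigma>) else 0)"
    (is "_ = (\<Sum>i\<le>n. ?term i)")
proof -
  note new_max = perms_less_Suc[OF \<sigma>] and n = length_perms[OF \<sigma>]
  have "perm_weight \<beta> \<sigma> * qderiv (rule_cyc \<beta>) (single (gap_word \<sigma>) 1) w' =
      (\<Sum>j<Suc n. perm_weight \<beta> \<sigma> *
        (if rewrite_at (gap_word \<sigma>) j = w' then rule_coeff \<beta> (gap_word \<sigma> ! j) else 0))"
    by (simp only: qderiv_rule_cyc_single length_gap_word n sum_distrib_left)
  also have "\<dots> = (\<Sum>j<Suc n. ?term (n - j))"
  proof (rule sum.cong[OF refl])
    fix j
    assume "j \<in> {..<Suc n}"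
    then have "j \<le> n" by simp
    then have "gap_word (insert_at (n - j) (Suc n) \<sigma>) = rewrite_at (gap_word \<sigma>) j"
      and "perm_weight \<beta> (insert_at (n - j) (Suc n) \<sigma>) =
        perm_weight \<beta> \<sigma> * rule_coeff \<beta> (gap_word \<sigma> ! j)"
      using gap_word_insert_at[of "n - j" \<sigma> "Suc n"] perm_weight_insert_max[OF \<sigma>, of "n - j"]
        new_max n by simp_all
    then show "perm_weight \<beta> \<sigma> *
        (if rewrite_at (gap_word \<sigma>) j = w' then rule_coeff \<beta> (gap_word \<sigma> ! j) else 0) =
        ?term (n - j)"
      by simp
  qed
  also have "\<dots> = (\<Sum>i\<le>n. ?term i)"
    using sum.nat_diff_reindex[of ?term "Suc n"] by (simp add: lessThan_Suc_atMost cong: if_cong)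
  finally show ?thesis .
qed

lemma qderiv_perm_sum:
  "qderiv (rule_cyc \<beta>) (lin_comb (perms n) (perm_weight \<beta>) gap_word) =
    lin_comb (perms (Suc n)) (perm_weight \<beta>) gap_word"
proof
  fix w'
  let ?term = "\<lambda>\<tau>. if gap_word \<tau> = w' then perm_weight \<beta> \<tau> else 0"
  have "qderiv (rule_cyc \<beta>) (lin_comb (perms n) (perm_weight \<beta>) gap_word) w' =
      (\<Sum>\<sigma>\<in>perms n. \<Sum>i\<le>n. ?term (insert_at i (Suc n) \<sigma>))"
    by (simp add: qderiv_lin_comb qderiv_gap_word)
  also have "\<dots> = (\<Sum>\<tau>\<in>perms (Suc n). ?term \<tau>)"
    using sum.reindex_bij_betw[OF bij_betw_insert_max, of ?term]
    by (simp add: sum.cartesian_product split_def cong: if_cong)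
  also have "\<dots> = lin_comb (perms (Suc n)) (perm_weight \<beta>) gap_word w'"
    by (simp add: lin_comb_def sum.inter_filter)
  finally show "qderiv (rule_cyc \<beta>) (lin_comb (perms n) (perm_weight \<beta>) gap_word) w' =
      lin_comb (perms (Suc n)) (perm_weight \<beta>) gap_word w'" .
qed

lemma qderiv_funpow_e0:
  "(qderiv (rule_cyc \<beta>) ^^ n) (single [(E, 0)] 1) = lin_comb (perms n) (perm_weight \<beta>) gap_word"
proof (induction n)
  case 0
  have "RLmin [] = 0" "inv_stat [] = 0"
    by (auto simp: RLmin_def is_rlmin_def inv_stat_def card_eq_0_iff)
  then have "gap_word [] = [(E, 0)]" "perm_weight \<beta> [] = 1"
    by (simp_all add: gap_word_def gap_label_def perm_weight_def)
  then have "{\<sigma> \<in> perms 0. gap_word \<sigma> = w} = (if w = [(E, 0)] then {[]} else {})" for w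
    by auto
  with \<open>perm_weight \<beta> [] = 1\<close> show ?case
    by (auto simp: lin_comb_def single_def simp del: One_nat_def)
next
  case (Suc n)
  then show ?case
    by (simp only: funpow.simps o_apply qderiv_perm_sum)
qed

lemma sg_Suc_neq:
  assumes "distinct xs" "0 < k" "k < length xs"
  shows "sg xs k \<noteq> sg xs (Suc k)"
  using assms by (simp add: sg_def nth_eq_iff_index_eq)

lemma is_isol_Suc_iff:
  assumes "distinct xs" "k < length xs"
  shows "is_isol xs (Suc k) \<longleftrightarrow> \<not> sg xs k > sg xs (Suc k) \<and> is_rlmin xs (Suc k)"
proof
  assume "is_isol xs (Suc k)"
  then have "k = 0 \<or> is_rlmin xs k" "is_rlmin xs (Suc k)"
    by (simp_all add: is_isol_def)
  then show "\<not> sg xs k > sg xs (Suc k) \<and> is_rlmin xs (Suc k)"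
    using assms by (auto simp: is_rlmin_def sg_def)
next
  assume ascent: "\<not> sg xs k > sg xs (Suc k) \<and> is_rlmin xs (Suc k)"
  show "is_isol xs (Suc k)"
  proof (cases "k = 0")
    case True
    then show ?thesis
      using ascent assms(2) by (simp add: is_isol_def Suc_le_eq)
  next
    case False
    then have "sg xs k < sg xs (Suc k)"
      using ascent sg_Suc_neq[OF assms(1) _ assms(2)] by (simp add: nat_neq_iff)
    have "is_rlmin xs k"
      unfolding is_rlmin_def
    proof (intro conjI allI impI)
      show "1 \<le> k" "k \<le> length xs"
        using False assms(2) by simp_all
      fix j
      assume "k < j \<and> j \<le> length xs"
      then consider "j = Suc k" | "Suc k < j \<and> j \<le> length xs"
        by linarith
      then show "sg xs k < sg xs j"
        using \<open>sg xs k < sg xs (Suc k)\<close> ascent by cases (auto simp: is_rlmin_def)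
    qed
    then show ?thesis
      using ascent assms(2) by (simp add: is_isol_def Suc_le_eq)
  qed
qed

lemma card_gap_label_E: "card {k. k \<le> length xs \<and> gap_label xs k = E} = 1"
proof -
  have "{k. k \<le> length xs \<and> gap_label xs k = E} = {length xs}"
    by (auto simp: gap_label_eq_E_iff)
  then show ?thesis by simp
qed

lemma card_gap_label_Y:
  assumes "0 \<notin> set xs"
  shows "card {k. k \<le> length xs \<and> gap_label xs k = Y} = des xs - 1"
proof -
  let ?desc = "{k. k < length xs \<and> sg xs k > sg xs (Suc k)}"
  have "{k. k \<le> length xs \<and> gap_label xs k = Y} = ?desc"
    by (auto simp: gap_label_def)
  moreover have "sg xs (length xs) > sg xs (Suc (length xs))" if "xs \<noteq> []"
  proof -
    have "sg xs (length xs) = last xs"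
      using that by (simp add: sg_def last_conv_nth Suc_le_eq)
    moreover have "last xs \<noteq> 0"
      using assms last_in_set[OF that] by metis
    ultimately show ?thesis
      by (simp add: sg_def)
  qed
  then have "{k. k \<le> length xs \<and> sg xs k > sg xs (Suc k)} =
      ?desc \<union> (if xs = [] then {} else {length xs})"
    by (auto simp: sg_def Suc_le_eq)
  ultimately show ?thesis
    by (simp add: des_def)
qed

lemma card_gap_label_X:
  assumes "distinct xs"
  shows "card {k. k \<le> length xs \<and> gap_label xs k = X} = iasc xs"
  unfolding iasc_def
  by (rule arg_cong[where f = card]) (auto simp: gap_label_def is_isol_Suc_iff[OF assms])

lemma card_gap_label_Z:
  assumes "distinct xs"
  shows "card {k. k \<le> length xs \<and> gap_label xs k = Z} = isol xs"
proof -
  have "{i. is_isol xs i} = Suc ` {k. k \<le> length xs \<and> gap_label xs k = Z}"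
  proof (intro set_eqI iffI)
    fix i
    assume "i \<in> {i. is_isol xs i}"
    then have "is_isol xs i"
      by simp
    then obtain k where "i = Suc k"
      by (cases i) (auto simp: is_isol_def)
    with \<open>is_isol xs i\<close> have "k < length xs" "is_isol xs (Suc k)"
      by (auto simp: is_isol_def)
    then show "i \<in> Suc ` {k. k \<le> length xs \<and> gap_label xs k = Z}"
      using \<open>i = Suc k\<close> by (auto simp: gap_label_def is_isol_Suc_iff[OF assms])
  qed (auto simp: gap_label_def is_isol_Suc_iff[OF assms] split: if_splits)
  then show ?thesis
    by (simp add: isol_def card_image)
qed

lemma expo_gap_word:
  assumes "distinct xs" "0 \<notin> set xs"
  shows "expo (gap_word xs) = (iasc xs, des xs - 1, isol xs, 1)"
  using assms
  by (simp add: expo_def cnt_gap_word card_gap_label_X card_gap_label_Y card_gap_label_Z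
      card_gap_label_E)

theorem theorem5p8:
  fixes \<beta> :: "'a::{comm_ring_1, ring_char_0}" and n :: nat
  assumes "n \<ge> 1"
  shows "phi ((qderiv (rule_cyc \<beta>) ^^ n) (single [(E, 0)] 1)) = eFinv \<beta> n"
proof
  fix m :: "nat \<times> nat \<times> nat \<times> nat"
  obtain a b c d where m: "m = (a, b, c, d)"
    by (cases m)
  have "expo (gap_word \<sigma>) = (iasc \<sigma>, des \<sigma> - 1, isol \<sigma>, 1)" if "\<sigma> \<in> perms n" for \<sigma>
    using that by (intro expo_gap_word) (auto simp: permutations_of_set_def)
  then have "{\<sigma> \<in> perms n. expo (gap_word \<sigma>) = m} =
      (if d = 1 then {\<sigma> \<in> perms n. iasc \<sigma> = a \<and> des \<sigma> - 1 = b \<and> isol \<sigma> = c} else {})"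
    by (auto simp: m)
  then show "phi ((qderiv (rule_cyc \<beta>) ^^ n) (single [(E, 0)] 1)) m = eFinv \<beta> n m"
    by (simp add: qderiv_funpow_e0 phi_lin_comb m eFinv_def perm_weight_def)
qed

end
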